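(* Let $\mathcal{G}$ be a locally finite, one-ended, hyperfinite, measure class preserving measurable graph on a standard probability space $(X,\nu)$, with measurable spanning tree $\mathcal{T}$. Then for $\nu$-a.e. $x$, letting $G$ be the $\mathcal G$-component of $x$ and $T=\mathcal T\cap G$, either $T\setminus\mathrm{Core}_{\mathcal{T}}(\mathcal{G})=T$ or all connected components of $T\setminus\mathrm{Core}_{\mathcal{T}}(\mathcal{G})$ are finite.
   Context: mcp: Borel bijections of $X$ with graph inside the connectedness relation of $\mathcal G$ preserve $\nu$-null sets. Hyperfinite: increasing union of measurable graphs with a.e. finite components. One-ended: a.e. component is one-ended. A measurable spanning tree is a measurable acyclic subgraph with the same components as $\mathcal G$ a.e. A fundamental cycle relative to $\mathcal T$ is a cycle in $\mathcal G$ with exactly one edge not in $\mathcal T$; $\mathrm{Core}_{\mathcal T}(\mathcal G)$ is the set of edges of $\mathcal T$ lying in infinitely many fundamental cycles. *)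

theory Defs
  imports "HOL-Probability.Probability"
begin

text \<open>Graphs on a vertex type are edge relations (sets of ordered pairs);
undirected simple graphs are symmetric and irreflexive relations.\<close>

definition simple_graph :: "('a \<times> 'a) set \<Rightarrow> bool" where
  "simple_graph H \<longleftrightarrow> sym H \<and> irrefl H"

definition component :: "('a \<times> 'a) set \<Rightarrow> 'a \<Rightarrow> 'a set" where
  "component H x = {y. (x, y) \<in> H\<^sup>*}"

definition locally_finite :: "('a \<times> 'a) set \<Rightarrow> bool" where
  "locally_finite H \<longleftrightarrow> (\<forall>x. finite {y. (x, y) \<in> H})"

definition induced :: "('a \<times> 'a) set \<Rightarrow> 'a set \<Rightarrow> ('a \<times> 'a) set" where
  "induced H S = {(u, v) \<in> H. u \<in> S \<and> v \<in> S}"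

definition components_on :: "('a \<times> 'a) set \<Rightarrow> 'a set \<Rightarrow> 'a set set" where
  "components_on H S = {component (induced H S) x | x. x \<in> S}"

definition one_ended_component :: "('a \<times> 'a) set \<Rightarrow> 'a set \<Rightarrow> bool" where
  "one_ended_component H C \<longleftrightarrow> infinite C \<and>
     (\<forall>F. finite F \<longrightarrow> (\<exists>!K. K \<in> components_on H (C - F) \<and> infinite K))"

definition cycle_edges :: "'a list \<Rightarrow> ('a \<times> 'a) set" where
  "cycle_edges c = (\<Union>i<length c. {(c ! i, c ! (Suc i mod length c)),
                                     (c ! (Suc i mod length c), c ! i)})"

definition is_cycle :: "('a \<times> 'a) set \<Rightarrow> 'a list \<Rightarrow> bool" where
  "is_cycle H c \<longleftrightarrow> length c \<ge> 3 \<and> distinct c \<and> cycle_edges c \<subseteq> H"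

definition acyclic_graph :: "('a \<times> 'a) set \<Rightarrow> bool" where
  "acyclic_graph H \<longleftrightarrow> (\<nexists>c. is_cycle H c)"

definition fundamental_cycle :: "('a \<times> 'a) set \<Rightarrow> ('a \<times> 'a) set \<Rightarrow> 'a list \<Rightarrow> bool" where
  "fundamental_cycle G T c \<longleftrightarrow> is_cycle G c \<and>
     (\<exists>u v. cycle_edges c - T = {(u, v), (v, u)})"

text \<open>Core: edges of T lying in infinitely many fundamental cycles (a cycle is
identified with its edge set).\<close>
definition Core :: "('a \<times> 'a) set \<Rightarrow> ('a \<times> 'a) set \<Rightarrow> ('a \<times> 'a) set" where
  "Core G T = {e \<in> T. infinite {cycle_edges c | c. fundamental_cycle G T c \<and> e \<in> cycle_edges c}}"

definition measurable_graph :: "'a measure \<Rightarrow> ('a \<times> 'a) set \<Rightarrow> bool" where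
  "measurable_graph M H \<longleftrightarrow> simple_graph H \<and> H \<subseteq> space M \<times> space M \<and> H \<in> sets (M \<Otimes>\<^sub>M M)"

definition mcp :: "'a measure \<Rightarrow> ('a \<times> 'a) set \<Rightarrow> bool" where
  "mcp M H \<longleftrightarrow> (\<forall>f. bij_betw f (space M) (space M) \<and> f \<in> M \<rightarrow>\<^sub>M M
        \<and> the_inv_into (space M) f \<in> M \<rightarrow>\<^sub>M M
        \<and> (\<forall>x\<in>space M. (x, f x) \<in> H\<^sup>*) \<longrightarrow>
        (\<forall>A\<in>sets M. emeasure M A = 0 \<longrightarrow> emeasure M (f ` A) = 0))"

definition hyperfinite :: "'a measure \<Rightarrow> ('a \<times> 'a) set \<Rightarrow> bool" where
  "hyperfinite M H \<longleftrightarrow> (\<exists>Hn :: nat \<Rightarrow> ('a \<times> 'a) set.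
      (\<forall>n. measurable_graph M (Hn n)) \<and> incseq Hn \<and> (\<Union>n. Hn n) = H \<and>
      (\<forall>n. AE x in M. finite (component (Hn n) x)))"

definition one_ended :: "'a measure \<Rightarrow> ('a \<times> 'a) set \<Rightarrow> bool" where
  "one_ended M H \<longleftrightarrow> (AE x in M. one_ended_component H (component H x))"

definition measurable_spanning_tree :: "'a measure \<Rightarrow> ('a \<times> 'a) set \<Rightarrow> ('a \<times> 'a) set \<Rightarrow> bool" where
  "measurable_spanning_tree M H T \<longleftrightarrow> measurable_graph M T \<and> T \<subseteq> H \<and> acyclic_graph T \<and>
      (AE x in M. component T x = component H x)"

end

theory Submission
  imports Defs "HOL-Library.Transitive_Closure_Table"
begin

(* Deleting an edge (p,q) of the spanning tree T splits the component C into the two sides of p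
   and q, and the non-tree edges between the two sides are exactly the non-tree edges of the
   fundamental cycles through (p,q).  Hence a tree edge outside the core is crossed by only
   finitely many edges of the graph, and one-endedness of C forces one of its sides to be
   finite.  Conversely, if one side of a tree edge is finite, then every fundamental cycle
   through it is closed by one of the finitely many edges at that side and otherwise runs along
   the (finite) tree path between its end points, so the edge is not in the core.
   Now let (a,b) be a core edge in C; both of its sides are infinite.  A non-core tree edge whose
   side towards a contains a therefore contains an infinite side of (a,b), so its far side is
   finite.  A component of T minus the core is connected to a by a finite tree path, and it
   leaves that path only through non-core edges into their finite far sides, so it is finite.
   Only one-endedness and the spanning property are used, at every point where they hold. *)

section \<open>Walks and cycles\<close>

fun walk_edges :: "'a list \<Rightarrow> ('a \<times> 'a) set" where
  "walk_edges (x # y # zs) = {(x, y), (y, x)} \<union> walk_edges (y # zs)"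
| "walk_edges _ = {}"

lemma sym_walk_edges: "sym (walk_edges w)"
  by (induction w rule: walk_edges.induct) (auto simp: sym_def)

lemma walk_edges_subset: "walk_edges w \<subseteq> set w \<times> set w"
  by (induction w rule: walk_edges.induct) auto

lemma finite_walk_edges: "finite (walk_edges w)"
  using walk_edges_subset by (rule finite_subset) simp

lemma walk_edges_append:
  "xs \<noteq> [] \<Longrightarrow> ys \<noteq> [] \<Longrightarrow>
    walk_edges (xs @ ys) = walk_edges xs \<union> walk_edges ys \<union> {(last xs, hd ys), (hd ys, last xs)}"
  by (induction xs rule: walk_edges.induct) (auto simp: neq_Nil_conv)

lemma walk_edges_conv_nth:
  "walk_edges w = (\<Union>i \<in> {i. Suc i < length w}. {(w ! i, w ! Suc i), (w ! Suc i, w ! i)})"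
proof (induction w rule: walk_edges.induct)
  case (1 x y zs)
  have "{i. Suc i < length (x # y # zs)} = insert 0 (Suc ` {i. Suc i < length (y # zs)})"
    by (auto simp: image_iff less_Suc_eq_0_disj)
  then show ?case
    using "1" by simp
qed auto

lemma sym_rtranclD: "sym H \<Longrightarrow> (u, v) \<in> H\<^sup>* \<Longrightarrow> (v, u) \<in> H\<^sup>*"
  by (rule symD[OF sym_rtrancl])

lemma walk_edges_connected:
  assumes "u \<in> set w" "v \<in> set w"
  shows "(u, v) \<in> (walk_edges w)\<^sup>*"
proof -
  have from_hd: "(hd w, z) \<in> (walk_edges w)\<^sup>*" if "z \<in> set w" for z
    using that
  proof (induction w rule: walk_edges.induct)
    case (1 x y zs)
    show ?case
    proof (cases "z = x")
      case False
      then have "(y, z) \<in> (walk_edges (y # zs))\<^sup>*"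
        using "1" by simp
      moreover have "(walk_edges (y # zs))\<^sup>* \<subseteq> (walk_edges (x # y # zs))\<^sup>*"
        by (rule rtrancl_mono) auto
      ultimately have "(y, z) \<in> (walk_edges (x # y # zs))\<^sup>*"
        by blast
      then show ?thesis
        by (rule converse_rtrancl_into_rtrancl[rotated]) simp
    qed simp
  qed auto
  have "(u, hd w) \<in> (walk_edges w)\<^sup>*"
    using sym_walk_edges from_hd[OF assms(1)] by (rule sym_rtranclD)
  then show ?thesis
    using from_hd[OF assms(2)] by (rule rtrancl_trans)
qed

lemma rtrancl_imp_distinct_walk:
  assumes "sym E" "(x, y) \<in> E\<^sup>*"
  obtains w where "w \<noteq> []" "hd w = x" "last w = y" "distinct w" "walk_edges w \<subseteq> E"
proof -
  have "(\<lambda>a b. (a, b) \<in> E)\<^sup>*\<^sup>* x y"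
    using assms(2) by (simp add: rtrancl_def)
  then obtain xs0 where "rtrancl_path (\<lambda>a b. (a, b) \<in> E) x xs0 y"
    by (auto simp: rtranclp_eq_rtrancl_path)
  then obtain xs where path: "rtrancl_path (\<lambda>a b. (a, b) \<in> E) x xs y" and "distinct (x # xs)"
    by (rule rtrancl_path_distinct)
  have "walk_edges (x # xs) \<subseteq> E \<and> last (x # xs) = y"
    using path by induction (use assms(1) in \<open>auto simp: sym_def\<close>)
  then show thesis
    using that[of "x # xs"] \<open>distinct (x # xs)\<close> by simp
qed

lemma length_append_ge_3:
  assumes "xs \<noteq> []" "ys \<noteq> []" "hd xs \<noteq> last xs \<or> hd ys \<noteq> last ys"
  shows "length (xs @ ys) \<ge> 3"
proof (rule ccontr)
  assume "\<not> length (xs @ ys) \<ge> 3"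
  then have "length xs + length ys \<le> 2"
    by simp
  moreover have "length xs \<ge> 1" "length ys \<ge> 1"
    using assms(1,2) by (simp_all add: Suc_le_eq)
  ultimately have "length xs = 1" "length ys = 1"
    by linarith+
  then have "hd xs = last xs" "hd ys = last ys"
    by (auto simp: length_Suc_conv)
  with assms(3) show False
    by simp
qed

lemma cycle_edges_swap: "(a, b) \<in> cycle_edges c \<longleftrightarrow> (b, a) \<in> cycle_edges c"
  by (auto simp: cycle_edges_def)

lemma finite_cycle_edges: "finite (cycle_edges c)"
  by (simp add: cycle_edges_def)

lemma cycle_edges_conv_walk_edges:
  assumes "c \<noteq> []"
  shows "cycle_edges c = walk_edges c \<union> {(last c, hd c), (hd c, last c)}"
proof -
  let ?n = "length c"
  let ?e = "\<lambda>i. {(c ! i, c ! (Suc i mod ?n)), (c ! (Suc i mod ?n), c ! i)}"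
  have "{..<?n} = insert (?n - 1) {i. Suc i < ?n}"
    using assms by auto
  then have "cycle_edges c = ?e (?n - 1) \<union> (\<Union>i \<in> {i. Suc i < ?n}. ?e i)"
    unfolding cycle_edges_def by (simp only: UN_insert)
  also have "(\<Union>i \<in> {i. Suc i < ?n}. ?e i) = walk_edges c"
    unfolding walk_edges_conv_nth by (rule SUP_cong) simp_all
  also have "?e (?n - 1) = {(last c, hd c), (hd c, last c)}"
    using assms by (simp add: last_conv_nth hd_conv_nth)
  finally show ?thesis
    by (simp only: Un_commute)
qed

lemma cycle_edges_rotate1: "cycle_edges (rotate1 c) = cycle_edges c"
proof (cases c)
  case (Cons x xs)
  then show ?thesis
    using walk_edges_append[of xs "[x]"] walk_edges_append[of "[x]" xs]
    by (cases "xs = []") (auto simp: cycle_edges_conv_walk_edges)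
qed simp

lemma cycle_edges_rotate: "cycle_edges (rotate n c) = cycle_edges c"
  by (induction n) (simp_all add: cycle_edges_rotate1)

lemma hd_last_notin_walk_edges:
  assumes "distinct w" "length w \<ge> 3"
  shows "(hd w, last w) \<notin> walk_edges w"
proof
  assume "(hd w, last w) \<in> walk_edges w"
  moreover have "w \<noteq> []"
    using assms(2) by auto
  ultimately have "(w ! 0, w ! (length w - 1)) \<in> walk_edges w"
    by (simp add: hd_conv_nth last_conv_nth)
  then obtain i where i: "i \<in> {i. Suc i < length w}"
    "(w ! 0, w ! (length w - 1)) \<in> {(w ! i, w ! Suc i), (w ! Suc i, w ! i)}"
    unfolding walk_edges_conv_nth by (rule UN_E)
  have lt: "0 < length w" "i < length w" "Suc i < length w" "length w - 1 < length w"
    using i(1) by auto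
  note nth_eq = nth_eq_iff_index_eq[OF assms(1)]
  from i(2) have "w ! 0 = w ! i \<and> w ! (length w - 1) = w ! Suc i \<or> w ! 0 = w ! Suc i"
    by auto
  then show False
  proof
    assume "w ! 0 = w ! i \<and> w ! (length w - 1) = w ! Suc i"
    then have "0 = i" "length w - 1 = Suc i"
      using nth_eq[OF lt(1,2)] nth_eq[OF lt(4,3)] by simp_all
    then show False
      using assms(2) by simp
  next
    assume "w ! 0 = w ! Suc i"
    then show False
      using nth_eq[OF lt(1,3)] by simp
  qed
qed

lemma cycle_minus_edge_connects_endpoints:
  assumes "distinct c" "length c \<ge> 3" "(u, v) \<in> cycle_edges c"
  shows "(u, v) \<in> (cycle_edges c - {(u, v), (v, u)})\<^sup>*"
proof -
  define n where "n = length c"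
  obtain i where i: "i \<in> {..<n}"
    "(u, v) \<in> {(c ! i, c ! (Suc i mod n)), (c ! (Suc i mod n), c ! i)}"
    using assms(3) unfolding cycle_edges_def n_def by (rule UN_E)
  \<comment> \<open>Rotate the cycle so that the edge uv becomes its closing edge.\<close>
  define c' where "c' = rotate (Suc i) c"
  have c': "c' \<noteq> []" "distinct c'" "length c' = n"
    using assms unfolding c'_def n_def by auto
  have hd: "hd c' = c ! (Suc i mod n)"
    using c'(1) hd_rotate_conv_nth[of c "Suc i"] unfolding c'_def n_def by simp
  have "(Suc i + (n - 1)) mod n = i"
    using i(1) by simp
  then have last: "last c' = c ! i"
    using c' unfolding c'_def by (simp add: last_conv_nth nth_rotate n_def del: rotate_Suc)
  have uv: "{(u, v), (v, u)} = {(last c', hd c'), (hd c', last c')}"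
    using i(2) unfolding hd last by auto
  have "cycle_edges c = cycle_edges c'"
    unfolding c'_def by (rule cycle_edges_rotate[symmetric])
  also have "\<dots> = walk_edges c' \<union> {(u, v), (v, u)}"
    unfolding uv by (rule cycle_edges_conv_walk_edges[OF c'(1)])
  finally have "cycle_edges c = walk_edges c' \<union> {(u, v), (v, u)}" .
  moreover have "(hd c', last c') \<notin> walk_edges c'" "(last c', hd c') \<notin> walk_edges c'"
    using hd_last_notin_walk_edges[of c'] sym_walk_edges[of c'] assms(2) c'
    unfolding n_def by (auto dest: symD)
  ultimately have "walk_edges c' \<subseteq> cycle_edges c - {(u, v), (v, u)}"
    unfolding uv by blast
  moreover have "(u, v) \<in> {(last c', hd c'), (hd c', last c')}"
    unfolding uv[symmetric] by simp
  then have "(u, v) \<in> (walk_edges c')\<^sup>*"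
    using c'(1) by (auto intro: walk_edges_connected)
  ultimately show ?thesis
    using rtrancl_mono by blast
qed

section \<open>Components\<close>

lemma induced_eq: "induced H S = H \<inter> S \<times> S"
  by (auto simp: induced_def)

lemma sym_Int_Times: "sym H \<Longrightarrow> sym (H \<inter> S \<times> S)"
  by (auto simp: sym_def)

lemma component_step: "y \<in> component H x \<Longrightarrow> (y, z) \<in> H \<Longrightarrow> z \<in> component H x"
  by (simp add: component_def rtrancl_into_rtrancl)

lemma rtrancl_if_same_component:
  assumes "sym H" "u \<in> component H x" "v \<in> component H x"
  shows "(u, v) \<in> H\<^sup>*"
proof -
  have "(x, u) \<in> H\<^sup>*" "(x, v) \<in> H\<^sup>*"
    using assms(2,3) by (simp_all add: component_def)
  then have "(u, x) \<in> H\<^sup>*"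
    using sym_rtranclD[OF assms(1)] by blast
  then show ?thesis
    using \<open>(x, v) \<in> H\<^sup>*\<close> by (rule rtrancl_trans)
qed

lemma component_eq:
  assumes "sym H" "y \<in> component H x"
  shows "component H y = component H x"
proof -
  have xy: "(x, y) \<in> H\<^sup>*"
    using assms(2) by (simp add: component_def)
  then have yx: "(y, x) \<in> H\<^sup>*"
    by (rule sym_rtranclD[OF assms(1)])
  show ?thesis
    unfolding component_def by (auto intro: rtrancl_trans[OF xy] rtrancl_trans[OF yx])
qed

lemma rtrancl_restrict_mem: "(x, y) \<in> (E \<inter> S \<times> S)\<^sup>* \<Longrightarrow> x \<in> S \<Longrightarrow> y \<in> S"
  by (induction rule: rtrancl_induct) auto

lemma rtrancl_stays_or_exits:
  assumes "(x, y) \<in> E\<^sup>*" "x \<in> S"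
  shows "(x, y) \<in> (E \<inter> S \<times> S)\<^sup>* \<or>
    (\<exists>u v. (x, u) \<in> (E \<inter> S \<times> S)\<^sup>* \<and> u \<in> S \<and> (u, v) \<in> E \<and> v \<notin> S)"
  using assms(1)
proof (induction rule: rtrancl_induct)
  case (step y z)
  show ?case
  proof (cases "(x, y) \<in> (E \<inter> S \<times> S)\<^sup>*")
    case True
    then have "y \<in> S"
      using assms(2) by (rule rtrancl_restrict_mem)
    then show ?thesis
      using True step.hyps(2) by (cases "z \<in> S") (auto intro: rtrancl_into_rtrancl)
  next
    case False
    then show ?thesis
      using step.IH by blast
  qed
qed simp

lemma finite_edges_at:
  assumes "sym G" "locally_finite G" "finite S"
  shows "finite {(u, v) \<in> G. u \<in> S \<or> v \<in> S}"
proof -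
  have "{(u, v) \<in> G. u \<in> S \<or> v \<in> S}
      \<subseteq> (SIGMA u:S. {v. (u, v) \<in> G}) \<union> (SIGMA u:S. {v. (u, v) \<in> G})\<inverse>"
    using symD[OF assms(1)] by auto
  moreover have "finite (SIGMA u:S. {v. (u, v) \<in> G})"
    using assms(2,3) by (simp add: locally_finite_def)
  ultimately show ?thesis
    by (simp add: finite_subset)
qed

lemma finite_components_on_component_minus:
  assumes "sym G" "locally_finite G" "finite F"
  shows "finite (components_on G (component G x - F))"
proof -
  let ?S = "component G x - F"
  let ?R = "G \<inter> ?S \<times> ?S"
  \<comment> \<open>Every component of the rest reaches x or a neighbour of F.\<close>
  define N where "N = insert x (\<Union>z \<in> F. {y. (z, y) \<in> G})"
  have "finite N"
    using assms(2,3) by (simp add: N_def locally_finite_def)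
  moreover have "components_on G ?S \<subseteq> component ?R ` N"
  proof
    fix K
    assume "K \<in> components_on G ?S"
    then obtain w where K: "K = component ?R w" "w \<in> ?S"
      unfolding components_on_def induced_eq by blast
    have "(x, w) \<in> G\<^sup>*"
      using K(2) by (simp add: component_def)
    then have "(w, x) \<in> G\<^sup>*"
      by (rule sym_rtranclD[OF assms(1)])
    from rtrancl_stays_or_exits[OF this K(2)]
    have "\<exists>y \<in> N. (w, y) \<in> ?R\<^sup>*"
    proof (elim disjE exE conjE)
      fix u v
      assume wu: "(w, u) \<in> ?R\<^sup>*" and u: "u \<in> ?S" and uv: "(u, v) \<in> G" and v: "v \<notin> ?S"
      have "v \<in> F"
        using u v component_step[of u G x v, OF _ uv] by blast
      then have "u \<in> N"
        using symD[OF assms(1) uv] by (auto simp: N_def)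
      then show ?thesis
        using wu by blast
    qed (auto simp: N_def)
    then obtain y where "y \<in> N" "y \<in> K"
      using K(1) by (auto simp: component_def)
    then have "K = component ?R y"
      using component_eq[OF sym_Int_Times[OF assms(1)], of y] K(1) by simp
    then show "K \<in> component ?R ` N"
      using \<open>y \<in> N\<close> by blast
  qed
  ultimately show ?thesis
    using finite_surj by blast
qed

lemma infinite_component_meets:
  assumes "finite (components_on H S)" "B \<subseteq> S" "infinite B"
  obtains K where "K \<in> components_on H S" "infinite K" "K \<inter> B \<noteq> {}"
proof (rule ccontr)
  let ?Ks = "{K \<in> components_on H S. K \<inter> B \<noteq> {}}"
  assume "\<not> thesis"
  with that have "finite K" if "K \<in> ?Ks" for K
    using \<open>K \<in> ?Ks\<close> by blast
  moreover have "finite ?Ks"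
    using assms(1) by simp
  ultimately have "finite (\<Union>?Ks)"
    by (rule finite_Union[rotated])
  moreover have "B \<subseteq> \<Union>?Ks"
  proof
    fix b
    assume "b \<in> B"
    then have "component (induced H S) b \<in> ?Ks" "b \<in> component (induced H S) b"
      using assms(2) by (auto simp: components_on_def component_def)
    then show "b \<in> \<Union>?Ks"
      by blast
  qed
  ultimately show False
    using assms(3) finite_subset by auto
qed

lemma components_on_respect_cut:
  assumes "sym G"
    and cut: "\<And>y z. (y, z) \<in> G \<Longrightarrow> y \<in> A \<Longrightarrow> z \<in> S - A \<Longrightarrow> y \<in> F \<or> z \<in> F"
    and K: "K \<in> components_on G (S - F)"
  shows "K \<subseteq> A \<or> K \<inter> A = {}"
proof -
  let ?R = "G \<inter> (S - F) \<times> (S - F)"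
  have same_side: "w \<in> A \<longleftrightarrow> z \<in> A" if "(w, z) \<in> ?R\<^sup>*" for w z
    using that
  proof (induction rule: rtrancl_induct)
    case (step y z)
    then have "(y, z) \<in> G" "(z, y) \<in> G" "y \<in> S - F" "z \<in> S - F"
      using symD[OF assms(1)] by auto
    then have "y \<in> A \<longleftrightarrow> z \<in> A"
      using cut[of y z] cut[of z y] by blast
    with step.IH show ?case
      by blast
  qed simp
  obtain w where "K = component ?R w" "w \<in> S - F"
    using K unfolding components_on_def induced_eq by blast
  then show ?thesis
    using same_side[of w] by (auto simp: component_def)
qed

lemma one_ended_component_finite_cut:
  assumes "sym G" "locally_finite G" "one_ended_component G (component G x)" "finite F"
    and "A \<subseteq> component G x"
    and cut: "\<And>y z. (y, z) \<in> G \<Longrightarrow> y \<in> A \<Longrightarrow> z \<in> component G x - A \<Longrightarrow> y \<in> F \<or> z \<in> F"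
  shows "finite A \<or> finite (component G x - A)"
proof (rule ccontr)
  let ?C = "component G x"
  let ?S = "?C - F"
  assume "\<not> (finite A \<or> finite (?C - A))"
  then have "infinite (A - F)" "infinite (?C - A - F)"
    using Diff_infinite_finite[OF assms(4)] by auto
  have finite_components: "finite (components_on G ?S)"
    using assms(1,2,4) by (rule finite_components_on_component_minus)
  have components: "K \<subseteq> A \<or> K \<inter> A = {}" if "K \<in> components_on G ?S" for K
    using assms(1) cut that by (rule components_on_respect_cut)
  have "A - F \<subseteq> ?S" "?C - A - F \<subseteq> ?S"
    using assms(5) by auto
  obtain K1 where K1: "K1 \<in> components_on G ?S" "infinite K1" "K1 \<inter> (A - F) \<noteq> {}"
    by (rule infinite_component_meets[OF finite_components \<open>A - F \<subseteq> ?S\<close> \<open>infinite (A - F)\<close>])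
  obtain K2 where K2: "K2 \<in> components_on G ?S" "infinite K2" "K2 \<inter> (?C - A - F) \<noteq> {}"
    by (rule infinite_component_meets[OF finite_components \<open>?C - A - F \<subseteq> ?S\<close>
        \<open>infinite (?C - A - F)\<close>])
  have "K1 \<noteq> K2"
    using components[OF K1(1)] components[OF K2(1)] K1(3) K2(3) by blast
  moreover have "\<exists>!K. K \<in> components_on G ?S \<and> infinite K"
    using assms(3,4) by (simp add: one_ended_component_def)
  ultimately show False
    using K1 K2 by blast
qed

section \<open>Sides of a tree edge\<close>

definition delete_edge :: "('a \<times> 'a) set \<Rightarrow> 'a \<Rightarrow> 'a \<Rightarrow> ('a \<times> 'a) set" where
  "delete_edge H p q = H - {(p, q), (q, p)}"

definition side :: "('a \<times> 'a) set \<Rightarrow> 'a \<Rightarrow> 'a \<Rightarrow> 'a set" where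
  "side T p q = component (delete_edge T p q) p"

definition separating_edges :: "('a \<times> 'a) set \<Rightarrow> 'a \<Rightarrow> 'a \<Rightarrow> ('a \<times> 'a) set" where
  "separating_edges T u v = {(p, q) \<in> T. (u, v) \<notin> (delete_edge T p q)\<^sup>*}"

lemma delete_edge_commute: "delete_edge H p q = delete_edge H q p"
  by (auto simp: delete_edge_def)

lemma delete_edge_subset: "delete_edge H p q \<subseteq> H"
  by (auto simp: delete_edge_def)

lemma sym_delete_edge: "sym H \<Longrightarrow> sym (delete_edge H p q)"
  by (auto simp: delete_edge_def sym_def)

lemma subset_delete_edge:
  assumes "sym W" "W \<subseteq> H" "(p, q) \<notin> W"
  shows "W \<subseteq> delete_edge H p q"
  using assms by (auto simp: delete_edge_def sym_def)

lemma mem_side_iff: "z \<in> side T p q \<longleftrightarrow> (p, z) \<in> (delete_edge T p q)\<^sup>*"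
  by (simp add: side_def component_def)

lemma side_self: "p \<in> side T p q"
  by (simp add: mem_side_iff)

lemma side_step: "y \<in> side T p q \<Longrightarrow> (y, z) \<in> delete_edge T p q \<Longrightarrow> z \<in> side T p q"
  unfolding side_def by (rule component_step)

lemma side_subset_component: "side T p q \<subseteq> component T p"
  unfolding side_def component_def using rtrancl_mono[OF delete_edge_subset[of T p q]] by blast

lemma sides_cover:
  assumes "(p, q) \<in> T" "(p, z) \<in> T\<^sup>*"
  shows "z \<in> side T p q \<union> side T q p"
  using assms(2)
proof (induction rule: rtrancl_induct)
  case base
  then show ?case
    by (simp add: side_self)
next
  case (step y z)
  show ?case
  proof (cases "(y, z) \<in> {(p, q), (q, p)}")
    case True
    then show ?thesis
      using side_self[of p T q] side_self[of q T p] by blast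
  next
    case False
    then have "(y, z) \<in> delete_edge T p q" "(y, z) \<in> delete_edge T q p"
      using step.hyps(2) by (auto simp: delete_edge_def)
    then show ?thesis
      using step.IH side_step[of y T p q z] side_step[of y T q p z] by blast
  qed
qed

lemma side_subset_side:
  assumes "y \<notin> side T t s" "t \<in> side T y y'"
  shows "side T t s \<subseteq> side T y y'"
proof
  fix z
  assume "z \<in> side T t s"
  then have "(t, z) \<in> (delete_edge T t s)\<^sup>*"
    by (simp add: mem_side_iff)
  then show "z \<in> side T y y'"
  proof (induction rule: rtrancl_induct)
    case (step w z)
    have "w \<in> side T t s" "z \<in> side T t s"
      using step.hyps side_step by (auto simp: mem_side_iff)
    then have "(w, z) \<in> delete_edge T y y'"
      using step.hyps(2) assms(1) by (auto simp: delete_edge_def)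
    then show ?case
      by (rule side_step[OF step.IH])
  qed (use assms(2) in simp)
qed

lemma walk_in_side:
  assumes "sym T" "y \<in> side T p q" "z \<in> side T p q"
  obtains w where "w \<noteq> []" "hd w = y" "last w = z" "distinct w"
    "walk_edges w \<subseteq> delete_edge T p q" "set w \<subseteq> side T p q"
proof -
  let ?D = "delete_edge T p q"
  have "(y, z) \<in> ?D\<^sup>*"
    using assms(2,3) unfolding side_def by (rule rtrancl_if_same_component[OF sym_delete_edge[OF assms(1)]])
  with sym_delete_edge[OF assms(1)] obtain w where w: "w \<noteq> []" "hd w = y" "last w = z"
    "distinct w" "walk_edges w \<subseteq> ?D"
    by (rule rtrancl_imp_distinct_walk)
  have "set w \<subseteq> side T p q"
  proof
    fix v
    assume "v \<in> set w"
    then have "(y, v) \<in> (walk_edges w)\<^sup>*"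
      using walk_edges_connected[of y w v] hd_in_set[OF w(1)] w(2) by simp
    then have "(y, v) \<in> ?D\<^sup>*"
      using rtrancl_mono[OF w(5)] by blast
    then show "v \<in> side T p q"
      using assms(2) by (auto simp: mem_side_iff intro: rtrancl_trans)
  qed
  with w show thesis
    by (rule that)
qed

lemma finite_separating_edges:
  assumes "sym T" "(u, v) \<in> T\<^sup>*"
  shows "finite (separating_edges T u v)"
proof -
  obtain w where w: "w \<noteq> []" "hd w = u" "last w = v" "distinct w" "walk_edges w \<subseteq> T"
    using assms by (rule rtrancl_imp_distinct_walk)
  have "(u, v) \<in> (walk_edges w)\<^sup>*"
    using w by (auto intro: walk_edges_connected)
  have "separating_edges T u v \<subseteq> walk_edges w"
  proof
    fix e
    assume e: "e \<in> separating_edges T u v"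
    show "e \<in> walk_edges w"
    proof (rule ccontr)
      assume "e \<notin> walk_edges w"
      then have "walk_edges w \<subseteq> delete_edge T (fst e) (snd e)"
        using sym_walk_edges w(5) by (intro subset_delete_edge) simp_all
      then have "(u, v) \<in> (delete_edge T (fst e) (snd e))\<^sup>*"
        using rtrancl_mono \<open>(u, v) \<in> (walk_edges w)\<^sup>*\<close> by blast
      then show False
        using e by (auto simp: separating_edges_def)
    qed
  qed
  then show ?thesis
    using finite_walk_edges finite_subset by blast
qed

locale forest =
  fixes T :: "('a \<times> 'a) set"
  assumes simple_T: "simple_graph T" and acyclic_T: "acyclic_graph T"
begin

lemma sym_T: "sym T"
  using simple_T by (simp add: simple_graph_def)

lemma delete_edge_disconnects:
  assumes pq: "(p, q) \<in> T"
  shows "(p, q) \<notin> (delete_edge T p q)\<^sup>*"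
proof
  assume "(p, q) \<in> (delete_edge T p q)\<^sup>*"
  with sym_delete_edge[OF sym_T] obtain w where w: "w \<noteq> []" "hd w = p" "last w = q" "distinct w"
    "walk_edges w \<subseteq> delete_edge T p q"
    by (rule rtrancl_imp_distinct_walk)
  have "p \<noteq> q"
    using pq simple_T by (auto simp: simple_graph_def irrefl_def)
  have "length w \<ge> 3"
  proof (rule ccontr)
    assume "\<not> length w \<ge> 3"
    moreover have "length w > 0"
      using w(1) by simp
    ultimately have "length w = 1 \<or> length w = 2"
      by arith
    then have "w = [hd w] \<or> w = [hd w, last w]"
      by (auto simp: length_Suc_conv numeral_2_eq_2)
    then have "w = [p] \<or> w = [p, q]"
      using w(2,3) by simp
    then show False
    proof
      assume "w = [p]"
      then show False
        using w(3) \<open>p \<noteq> q\<close> by simp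
    next
      assume "w = [p, q]"
      then have "(p, q) \<in> walk_edges w"
        by simp
      then show False
        using w(5) by (auto simp: delete_edge_def)
    qed
  qed
  moreover have "cycle_edges w \<subseteq> T"
    using w(1-3,5) pq symD[OF sym_T pq] delete_edge_subset[of T p q]
    by (auto simp: cycle_edges_conv_walk_edges)
  ultimately have "is_cycle T w"
    using w(4) by (simp add: is_cycle_def)
  then show False
    using acyclic_T by (auto simp: acyclic_graph_def)
qed

lemma sides_disjoint:
  assumes "(p, q) \<in> T"
  shows "side T p q \<inter> side T q p = {}"
proof -
  have "(p, q) \<in> (delete_edge T p q)\<^sup>*" if "z \<in> side T p q" "z \<in> side T q p" for z
  proof -
    have "(p, z) \<in> (delete_edge T p q)\<^sup>*" "(q, z) \<in> (delete_edge T p q)\<^sup>*"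
      using that by (simp_all add: mem_side_iff delete_edge_commute[of T q p])
    then have "(z, q) \<in> (delete_edge T p q)\<^sup>*"
      using sym_rtranclD[OF sym_delete_edge[OF sym_T]] by blast
    then show ?thesis
      using \<open>(p, z) \<in> (delete_edge T p q)\<^sup>*\<close> by (rule rtrancl_trans[rotated])
  qed
  then show ?thesis
    using delete_edge_disconnects[OF assms] by blast
qed

end

section \<open>Fundamental cycles and the core\<close>

locale forest_subgraph = forest T for T :: "('a \<times> 'a) set" +
  fixes G :: "('a \<times> 'a) set"
  assumes simple_G: "simple_graph G" and subgraph: "T \<subseteq> G"
begin

lemma sym_G: "sym G"
  using simple_G by (simp add: simple_graph_def)

lemma Core_swap: "(a, b) \<in> Core G T \<Longrightarrow> (b, a) \<in> Core G T"
  using symD[OF sym_T] cycle_edges_swap[of a b] by (simp add: Core_def)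

lemma fundamental_cycle_through_crossing_edge:
  assumes pq: "(p, q) \<in> T" and uv: "(u, v) \<in> G - T"
    and u: "u \<in> side T p q" and v: "v \<in> side T q p"
  obtains c where "fundamental_cycle G T c" "(u, v) \<in> cycle_edges c" "(p, q) \<in> cycle_edges c"
proof -
  obtain w1 where w1: "w1 \<noteq> []" "hd w1 = p" "last w1 = u" "distinct w1"
    "walk_edges w1 \<subseteq> delete_edge T p q" "set w1 \<subseteq> side T p q"
    using sym_T side_self u by (rule walk_in_side)
  obtain w2 where w2: "w2 \<noteq> []" "hd w2 = v" "last w2 = q" "distinct w2"
    "walk_edges w2 \<subseteq> delete_edge T q p" "set w2 \<subseteq> side T q p"
    using sym_T v side_self by (rule walk_in_side)
  let ?c = "w2 @ w1"
  have "distinct ?c"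
    using w1(4,6) w2(4,6) sides_disjoint[OF pq] by auto
  define tree_part where "tree_part = walk_edges w2 \<union> walk_edges w1 \<union> {(q, p), (p, q)}"
  have "tree_part \<subseteq> T"
    using w1(5) w2(5) pq symD[OF sym_T pq] delete_edge_subset[of T p q] delete_edge_subset[of T q p]
    by (auto simp: tree_part_def)
  have "(u, v) \<notin> T" "(v, u) \<notin> T"
    using uv symD[OF sym_T, of v u] by auto
  have edges: "cycle_edges ?c = tree_part \<union> {(u, v), (v, u)}"
    using w1(1-3) w2(1-3)
    by (auto simp: cycle_edges_conv_walk_edges walk_edges_append tree_part_def)
  have "length ?c \<ge> 3"
    using w1(1-3) w2(1-3) uv pq by (intro length_append_ge_3) auto
  moreover have "cycle_edges ?c \<subseteq> G"
    using edges \<open>tree_part \<subseteq> T\<close> subgraph uv symD[OF sym_G, of u v] by auto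
  moreover have "cycle_edges ?c - T = {(u, v), (v, u)}"
    using edges \<open>tree_part \<subseteq> T\<close> \<open>(u, v) \<notin> T\<close> \<open>(v, u) \<notin> T\<close> by auto
  ultimately have "fundamental_cycle G T ?c"
    using \<open>distinct ?c\<close> by (auto simp: fundamental_cycle_def is_cycle_def)
  moreover have "(u, v) \<in> cycle_edges ?c" "(p, q) \<in> cycle_edges ?c"
    using edges by (simp_all add: tree_part_def)
  ultimately show thesis
    by (rule that)
qed

lemma fundamental_cycle_subset_separating_edges:
  assumes c: "fundamental_cycle G T c" and uv: "cycle_edges c - T = {(u, v), (v, u)}"
  shows "cycle_edges c \<subseteq> {(u, v), (v, u)} \<union> separating_edges T u v"
proof
  fix e
  assume e: "e \<in> cycle_edges c"
  show "e \<in> {(u, v), (v, u)} \<union> separating_edges T u v"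
  proof (cases "e \<in> T")
    case False
    then show ?thesis
      using e uv by blast
  next
    case True
    obtain p q where pq: "e = (p, q)"
      by (cases e)
    let ?D = "delete_edge T p q"
    have "(u, v) \<notin> ?D\<^sup>*"
    proof
      assume "(u, v) \<in> ?D\<^sup>*"
      moreover have "(v, u) \<in> ?D\<^sup>*"
        using sym_delete_edge[OF sym_T] calculation by (rule sym_rtranclD)
      ultimately have "cycle_edges c - {(p, q), (q, p)} \<subseteq> ?D\<^sup>*"
        using uv by (auto simp: delete_edge_def)
      then have "(cycle_edges c - {(p, q), (q, p)})\<^sup>* \<subseteq> ?D\<^sup>*"
        by (rule rtrancl_subset_rtrancl)
      moreover have "(p, q) \<in> (cycle_edges c - {(p, q), (q, p)})\<^sup>*"
        using c e pq by (intro cycle_minus_edge_connects_endpoints)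
          (auto simp: fundamental_cycle_def is_cycle_def)
      ultimately show False
        using delete_edge_disconnects True pq by blast
    qed
    then show ?thesis
      using True pq by (simp add: separating_edges_def)
  qed
qed

lemma fundamental_cycle_meets_side:
  assumes c: "fundamental_cycle G T c" and uv: "cycle_edges c - T = {(u, v), (v, u)}"
    and ab: "(a, b) \<in> cycle_edges c" "(a, b) \<in> T"
  shows "u \<in> side T a b \<or> v \<in> side T a b"
proof (rule ccontr)
  let ?S = "side T a b"
  let ?E = "cycle_edges c - {(a, b), (b, a)}"
  assume outside: "\<not> (u \<in> ?S \<or> v \<in> ?S)"
  have "(a, b) \<in> ?E\<^sup>*"
    using c ab(1) by (intro cycle_minus_edge_connects_endpoints)
      (auto simp: fundamental_cycle_def is_cycle_def)
  note exits = rtrancl_stays_or_exits[OF this side_self]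
  have "b \<notin> ?S"
    using delete_edge_disconnects[OF ab(2)] by (simp add: mem_side_iff)
  have "(a, b) \<notin> (?E \<inter> ?S \<times> ?S)\<^sup>*"
  proof
    assume "(a, b) \<in> (?E \<inter> ?S \<times> ?S)\<^sup>*"
    then have "b \<in> ?S"
      using side_self by (rule rtrancl_restrict_mem)
    with \<open>b \<notin> ?S\<close> show False
      by contradiction
  qed
  with exits obtain y z where yz: "y \<in> ?S" "(y, z) \<in> ?E" "z \<notin> ?S"
    by blast
  have "(y, z) \<notin> T"
  proof
    assume "(y, z) \<in> T"
    with yz(2) have "(y, z) \<in> delete_edge T a b"
      by (simp add: delete_edge_def)
    with yz(1) have "z \<in> ?S"
      by (rule side_step)
    with yz(3) show False
      by contradiction
  qed
  with yz(2) uv have "y = u \<or> y = v"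
    by blast
  with yz(1) outside show False
    by blast
qed

lemma fundamental_cycle_through_tree_edge:
  assumes c: "fundamental_cycle G T c" and ab: "(a, b) \<in> cycle_edges c" "(a, b) \<in> T"
  obtains u v where "(u, v) \<in> G" "u \<in> side T a b \<or> v \<in> side T a b"
    "cycle_edges c \<subseteq> {(u, v), (v, u)} \<union> separating_edges T u v"
proof -
  obtain u v where uv: "cycle_edges c - T = {(u, v), (v, u)}"
    using c by (auto simp: fundamental_cycle_def)
  have "(u, v) \<in> G"
    using c uv by (auto simp: fundamental_cycle_def is_cycle_def)
  then show thesis
    using fundamental_cycle_meets_side[OF c uv ab] fundamental_cycle_subset_separating_edges[OF c uv]
    by (rule that)
qed

lemma finite_side_imp_notin_Core:
  assumes lf: "locally_finite G" and span: "component T a = component G a"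
    and ab: "(a, b) \<in> T" and fin: "finite (side T a b)"
  shows "(a, b) \<notin> Core G T"
proof
  assume "(a, b) \<in> Core G T"
  let ?S = "side T a b"
  define P where "P = {(u, v) \<in> G. u \<in> ?S \<or> v \<in> ?S}"
  have "finite P"
    unfolding P_def using sym_G lf fin by (rule finite_edges_at)
  have tree_connected: "(u, v) \<in> T\<^sup>*" if "(u, v) \<in> P" for u v
  proof -
    have "u \<in> component G a" "v \<in> component G a"
      using that side_subset_component[of T a b] span symD[OF sym_G, of u v]
      by (auto simp: P_def intro: component_step)
    then show ?thesis
      using span by (auto intro: rtrancl_if_same_component[OF sym_T])
  qed
  have "{cycle_edges c | c. fundamental_cycle G T c \<and> (a, b) \<in> cycle_edges c}
      \<subseteq> (\<Union>(u, v) \<in> P. Pow ({(u, v), (v, u)} \<union> separating_edges T u v))"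
  proof clarify
    fix c
    assume "fundamental_cycle G T c" "(a, b) \<in> cycle_edges c"
    then obtain u v where "(u, v) \<in> G" "u \<in> ?S \<or> v \<in> ?S"
      "cycle_edges c \<subseteq> {(u, v), (v, u)} \<union> separating_edges T u v"
      using ab by (rule fundamental_cycle_through_tree_edge)
    then show "cycle_edges c \<in> (\<Union>(u, v) \<in> P. Pow ({(u, v), (v, u)} \<union> separating_edges T u v))"
      unfolding P_def by blast
  qed
  moreover have "finite (\<Union>(u, v) \<in> P. Pow ({(u, v), (v, u)} \<union> separating_edges T u v))"
    using \<open>finite P\<close> finite_separating_edges[OF sym_T tree_connected] by auto
  ultimately show False
    using \<open>(a, b) \<in> Core G T\<close> finite_subset by (auto simp: Core_def)
qed

lemma finite_crossing_edges:
  assumes pq: "(p, q) \<in> T" and not_Core: "(p, q) \<notin> Core G T"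
  shows "finite {(u, v) \<in> G - T. u \<in> side T p q \<and> v \<in> side T q p}"
proof -
  let ?cycles = "{cycle_edges c | c. fundamental_cycle G T c \<and> (p, q) \<in> cycle_edges c}"
  have "{(u, v) \<in> G - T. u \<in> side T p q \<and> v \<in> side T q p} \<subseteq> \<Union>?cycles"
  proof clarify
    fix u v
    assume "(u, v) \<in> G" "(u, v) \<notin> T" "u \<in> side T p q" "v \<in> side T q p"
    then obtain c where "fundamental_cycle G T c" "(u, v) \<in> cycle_edges c" "(p, q) \<in> cycle_edges c"
      using fundamental_cycle_through_crossing_edge[OF pq] by blast
    then show "(u, v) \<in> \<Union>?cycles"
      by blast
  qed
  moreover have "finite ?cycles"
    using not_Core pq by (simp add: Core_def)
  then have "finite (\<Union>?cycles)"
    using finite_cycle_edges by auto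
  ultimately show ?thesis
    by (rule finite_subset)
qed

lemma component_minus_side:
  assumes span: "component T p = component G p" and pq: "(p, q) \<in> T"
  shows "side T p q \<subseteq> component G p" "component G p - side T p q = side T q p"
proof -
  have "q \<in> component T p"
    using pq by (simp add: component_def)
  then have "component T q = component G p"
    using component_eq[OF sym_T \<open>q \<in> component T p\<close>] span by simp
  then have sides: "side T p q \<subseteq> component G p" "side T q p \<subseteq> component G p"
    using side_subset_component[of T p q] side_subset_component[of T q p] span by auto
  have "z \<in> side T p q \<union> side T q p" if "z \<in> component G p" for z
  proof -
    have "z \<in> component T p"
      using that span by simp
    then show ?thesis
      using sides_cover[OF pq] by (simp add: component_def)
  qed
  then show "side T p q \<subseteq> component G p" "component G p - side T p q = side T q p"
    using sides sides_disjoint[OF pq] by blast+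
qed

lemma notin_Core_imp_finite_side:
  assumes lf: "locally_finite G" and span: "component T p = component G p"
    and one_ended: "one_ended_component G (component G p)"
    and pq: "(p, q) \<in> T" and not_Core: "(p, q) \<notin> Core G T"
  shows "finite (side T p q) \<or> finite (side T q p)"
proof -
  let ?C = "component G p"
  define X where "X = {(u, v) \<in> G - T. u \<in> side T p q \<and> v \<in> side T q p}"
  define F where "F = {p, q} \<union> fst ` X \<union> snd ` X"
  have "finite F"
    using finite_crossing_edges[OF pq not_Core] by (simp add: F_def X_def)
  have "y \<in> F \<or> z \<in> F" if yz: "(y, z) \<in> G" "y \<in> side T p q" "z \<in> ?C - side T p q" for y z
  proof (cases "(y, z) \<in> T")
    case True
    have "(y, z) \<notin> delete_edge T p q"
      using side_step[OF yz(2)] yz(3) by blast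
    then have "y \<in> {p, q}"
      using True by (auto simp: delete_edge_def)
    then show ?thesis
      by (auto simp: F_def)
  next
    case False
    then have "(y, z) \<in> X"
      using yz component_minus_side[OF span pq] by (simp add: X_def)
    then show ?thesis
      by (force simp: F_def)
  qed
  then have "finite (side T p q) \<or> finite (?C - side T p q)"
    using one_ended_component_finite_cut[OF sym_G lf one_ended \<open>finite F\<close>]
      component_minus_side(1)[OF span pq] by blast
  then show ?thesis
    using component_minus_side(2)[OF span pq] by simp
qed

end

section \<open>Components of the tree minus its core\<close>

locale spanning_tree_of_one_ended_component = forest_subgraph T G for T G :: "('a \<times> 'a) set" +
  fixes x :: 'a
  assumes locally_finite_G: "locally_finite G"
    and spanning: "component T x = component G x"
    and one_ended: "one_ended_component G (component G x)"
begin

abbreviation C :: "'a set" where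
  "C \<equiv> component G x"

lemma component_eq_C:
  assumes "v \<in> C"
  shows "component G v = C" "component T v = C"
  using component_eq[OF sym_G assms] component_eq[OF sym_T, of v x] assms spanning by simp_all

lemma far_side_finite:
  assumes ab: "(a, b) \<in> Core G T" "a \<in> C"
    and yy': "(y, y') \<in> T - Core G T" "y \<in> C" and a: "a \<in> side T y y'"
  shows "finite (side T y' y)"
proof -
  have abT: "(a, b) \<in> T" "(b, a) \<in> T"
    using ab(1) symD[OF sym_T] by (auto simp: Core_def)
  have "b \<in> C"
    using ab(2) subgraph abT(1) by (auto intro: component_step[of a G x b])
  have "infinite (side T a b)"
    using finite_side_imp_notin_Core[OF locally_finite_G _ abT(1)] component_eq_C[OF ab(2)] ab(1)
    by auto
  moreover have "infinite (side T b a)"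
    using finite_side_imp_notin_Core[OF locally_finite_G _ abT(2)] component_eq_C[OF \<open>b \<in> C\<close>]
      Core_swap[OF ab(1)] by auto
  moreover have "(a, b) \<in> delete_edge T y y'"
    using abT(1) ab(1) yy'(1) Core_swap[of y' y] by (auto simp: delete_edge_def)
  with a have "b \<in> side T y y'"
    by (rule side_step)
  then have "side T a b \<subseteq> side T y y' \<or> side T b a \<subseteq> side T y y'"
    using side_subset_side[OF _ a] side_subset_side[of y T b a] sides_disjoint[OF abT(1)] by blast
  ultimately have "infinite (side T y y')"
    using finite_subset by blast
  moreover have "finite (side T y y') \<or> finite (side T y' y)"
    using notin_Core_imp_finite_side[OF locally_finite_G _ _ _] yy' component_eq_C[OF yy'(2)]
      one_ended by auto
  ultimately show ?thesis
    by blast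
qed

lemma leaving_tree_path_into_finite_side:
  assumes ab: "(a, b) \<in> Core G T" "a \<in> C"
    and w: "w \<noteq> []" "last w = a" "walk_edges w \<subseteq> T"
    and z: "(z, hd w) \<in> (T \<inter> C \<times> C - Core G T)\<^sup>*" "z \<notin> set w"
  obtains u v where "(v, u) \<in> G" "v \<in> set w" "z \<in> side T u v" "finite (side T u v)"
proof -
  let ?R = "T \<inter> C \<times> C - Core G T"
  let ?V = "set w"
  have "(z, hd w) \<notin> (?R \<inter> (- ?V) \<times> (- ?V))\<^sup>*"
    using rtrancl_restrict_mem[of z "hd w" ?R "- ?V"] z(2) hd_in_set[OF w(1)] by auto
  then obtain u v where uv: "(z, u) \<in> (?R \<inter> (- ?V) \<times> (- ?V))\<^sup>*" "u \<notin> ?V" "(u, v) \<in> ?R" "v \<in> ?V"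
    using rtrancl_stays_or_exits[OF z(1), of "- ?V"] z(2) by auto
  have "?R \<inter> (- ?V) \<times> (- ?V) \<subseteq> delete_edge T u v"
    using uv(4) by (auto simp: delete_edge_def)
  then have "(z, u) \<in> (delete_edge T u v)\<^sup>*"
    using uv(1) rtrancl_mono by blast
  then have "z \<in> side T u v"
    using sym_rtranclD[OF sym_delete_edge[OF sym_T]] by (auto simp: mem_side_iff)
  moreover have "finite (side T u v)"
  proof (rule far_side_finite[OF ab])
    show "(v, u) \<in> T - Core G T" "v \<in> C"
      using uv(3) symD[OF sym_T] Core_swap by auto
    have "(u, v) \<notin> walk_edges w"
      using walk_edges_subset[of w] uv(2) by auto
    then have "walk_edges w \<subseteq> delete_edge T v u"
      using sym_walk_edges w(3) by (subst delete_edge_commute) (rule subset_delete_edge)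
    moreover have "(v, a) \<in> (walk_edges w)\<^sup>*"
      using walk_edges_connected[OF uv(4) last_in_set[OF w(1)]] w(2) by simp
    ultimately show "a \<in> side T v u"
      using rtrancl_mono[of "walk_edges w" "delete_edge T v u"] by (auto simp: mem_side_iff)
  qed
  moreover have "(v, u) \<in> G"
    using uv(3) symD[OF sym_T] subgraph by auto
  ultimately show thesis
    using uv(4) that by blast
qed

lemma components_finite_if_Core_edge:
  assumes ab: "(a, b) \<in> Core G T" "a \<in> C"
  shows "\<forall>K \<in> components_on (T \<inter> C \<times> C - Core G T) C. finite K"
proof
  let ?R = "T \<inter> C \<times> C - Core G T"
  have "sym ?R"
    using sym_T Core_swap by (auto simp: sym_def)
  fix K
  assume "K \<in> components_on ?R C"
  moreover have "induced ?R C = ?R"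
    by (auto simp: induced_def)
  ultimately obtain m where K: "K = component ?R m" "m \<in> C"
    unfolding components_on_def by auto
  have "(m, a) \<in> T\<^sup>*"
    using K(2) ab(2) spanning rtrancl_if_same_component[OF sym_T, of m x a] by simp
  with sym_T obtain w where w: "w \<noteq> []" "hd w = m" "last w = a" "distinct w" "walk_edges w \<subseteq> T"
    by (rule rtrancl_imp_distinct_walk)
  \<comment> \<open>K is covered by the tree path from m to a and the far sides of the edges leaving it.\<close>
  define I where "I = {(v, u) \<in> G. v \<in> set w \<and> finite (side T u v)}"
  have "I \<subseteq> {(v, u) \<in> G. v \<in> set w \<or> u \<in> set w}"
    by (auto simp: I_def)
  then have "finite I"
    using finite_edges_at[OF sym_G locally_finite_G, of "set w"] by (rule finite_subset) simp
  have "K \<subseteq> set w \<union> (\<Union>(v, u) \<in> I. side T u v)"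
  proof
    fix z
    assume "z \<in> K"
    show "z \<in> set w \<union> (\<Union>(v, u) \<in> I. side T u v)"
    proof (cases "z \<in> set w")
      case False
      have "(hd w, z) \<in> ?R\<^sup>*"
        using \<open>z \<in> K\<close> K(1) w(2) by (simp add: component_def)
      with \<open>sym ?R\<close> have "(z, hd w) \<in> ?R\<^sup>*"
        by (rule sym_rtranclD)
      then obtain u v where "(v, u) \<in> G" "v \<in> set w" "z \<in> side T u v" "finite (side T u v)"
        using leaving_tree_path_into_finite_side[OF ab w(1,3,5)] False by blast
      then show ?thesis
        by (auto simp: I_def)
    qed simp
  qed
  moreover have "finite (set w \<union> (\<Union>(v, u) \<in> I. side T u v))"
    using \<open>finite I\<close> by (auto simp: I_def)
  ultimately show "finite K"
    by (rule finite_subset)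
qed

lemma Core_free_or_finite_components:
  "T \<inter> C \<times> C - Core G T = T \<inter> C \<times> C \<or>
    (\<forall>K \<in> components_on (T \<inter> C \<times> C - Core G T) C. finite K)"
  using components_finite_if_Core_edge by blast

end

theorem lemma3p17:
  fixes M :: "'a::polish_space measure" and G T :: "('a \<times> 'a) set"
  assumes "prob_space M" and "sets M = sets borel"
    and "measurable_graph M G" and "locally_finite G" and "one_ended M G"
    and "hyperfinite M G" and "mcp M G"
    and "measurable_spanning_tree M G T"
  shows "AE x in M.
    (let C = component G x; TC = T \<inter> (C \<times> C); R = TC - Core G T in
      R = TC \<or> (\<forall>K \<in> components_on R C. finite K))"
proof -
  have "forest_subgraph T G"
    using assms(3,8) by unfold_locales (auto simp: measurable_graph_def measurable_spanning_tree_def)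
  have "AE x in M. component T x = component G x"
    using assms(8) by (simp add: measurable_spanning_tree_def)
  moreover have "AE x in M. one_ended_component G (component G x)"
    using assms(5) by (simp add: one_ended_def)
  ultimately show ?thesis
  proof eventually_elim
    case (elim x)
    interpret spanning_tree_of_one_ended_component T G x
      using \<open>forest_subgraph T G\<close> assms(4) elim
      by (simp add: spanning_tree_of_one_ended_component_def spanning_tree_of_one_ended_component_axioms_def)
    show ?case
      using Core_free_or_finite_components by (simp add: Let_def)
  qed
qed

end
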